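(* Let $p\ge2$ and let $\varphi:\mathbb{R}^n\to\mathbb{R}\cup\{+\infty\}$ be proper and lower semicontinuous. Suppose $\bar x=0$ is a $p$-calm point of $\varphi$ with constant $M>0$, $\varphi(0)=0$, and $\varphi$ is $q$-prox-regular with some $q\ge p$ at $\bar x=0$ for $\bar\zeta=0\in\partial\varphi(0)$ with constants $\varepsilon<\frac12$ and $\rho>0$. Then for each $\gamma\in\big(0,\min\{\frac{2^{1-p}}{Mp},\frac1{\rho2^{2p-3}}\}\big)$ there exists a neighborhood $U\subseteq\mathbb{B}(0;\varepsilon)$ such that $$\|\operatorname{prox}^p_{\gamma\varphi}(x_2)-\operatorname{prox}^p_{\gamma\varphi}(x_1)\|\le L_p\|x_2-x_1\|^{1/q}\quad\forall x_1,x_2\in U,$$ and $\varphi^p_\gamma$ is differentiable on $U$ with $$\|\nabla\varphi^p_\gamma(x_2)-\nabla\varphi^p_\gamma(x_1)\|\le\mathcal{L}_p\|x_2-x_1\|^{1/q}\quad\forall x_1,x_2\in U,$$ where $s=\frac p{p-1}$, $L_p:=\Big(\frac{2(1+\frac{2^p}{\kappa_s})\varepsilon^{p-1}}{\frac1{2^{2p-3}}-\gamma\rho}\Big)^{1/q}$ and $\mathcal{L}_p:=\frac{2(2\varepsilon)^{p-2}}{\gamma\kappa_s}\big((2\varepsilon)^{\frac{q-1}q}+L_p\big)$.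
   Context: $\operatorname{prox}^p_{\gamma\varphi}(x):=\operatorname{argmin}_{y}\big(\varphi(y)+\frac{1}{p\gamma}\|x-y\|^p\big)$, $\varphi^p_\gamma(x):=\inf_y\big(\varphi(y)+\frac{1}{p\gamma}\|x-y\|^p\big)$. $\bar x$ is a $p$-calm point with constant $M>0$ if $\varphi(x)+M\|x-\bar x\|^p>\varphi(\bar x)$ for all $x\neq\bar x$. $\partial$ is the Mordukhovich (limiting) subdifferential. $\varphi$ is $q$-prox-regular ($q\ge2$) at $\bar x$ for $\bar\zeta\in\partial\varphi(\bar x)$ with constants $\varepsilon>0,\rho\ge0$ if $\varphi(x')\ge\varphi(x)+\langle\zeta,x'-x\rangle-\frac\rho2\|x'-x\|^q$ for all $x'\in\mathbb{B}(\bar x;\varepsilon)$, whenever $x\in\mathbb{B}(\bar x;\varepsilon)$, $\zeta\in\partial\varphi(x)\cap\mathbb{B}(\bar\zeta;\varepsilon)$, $\varphi(x)<\varphi(\bar x)+\varepsilon$. The constant $\kappa_t$ ($t\in(1,2]$) is: $\kappa_t=\frac{(2+\sqrt3)(t-1)}{16}$ for $t\in(1,\hat t]$, $\kappa_t=\frac{2+\sqrt3}{16}(1-(3-\sqrt3)^{1-t})$ for $t\in[\hat t,2)$, $\kappa_2=1$, where $\hat t\approx1.3214$ solves $\frac{t(t-1)}2=1-\big[1+\frac{(2-\sqrt3)t}{t-1}\big]^{1-t}$ on $(1,2]$. *)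

theory Defs
  imports "HOL-Analysis.Analysis"
begin

definition proper_fun :: "('a \<Rightarrow> ereal) \<Rightarrow> bool" where
  "proper_fun \<phi> \<longleftrightarrow> (\<forall>x. \<phi> x \<noteq> -\<infinity>) \<and> (\<exists>x. \<phi> x \<noteq> \<infinity>)"

definition lsc_fun :: "('a::topological_space \<Rightarrow> ereal) \<Rightarrow> bool" where
  "lsc_fun \<phi> \<longleftrightarrow> (\<forall>x c. c < \<phi> x \<longrightarrow> eventually (\<lambda>y. c < \<phi> y) (at x))"

definition p_calm :: "real \<Rightarrow> real \<Rightarrow> ('a::real_normed_vector \<Rightarrow> ereal) \<Rightarrow> 'a \<Rightarrow> bool" where
  "p_calm p M \<phi> xb \<longleftrightarrow>
     (\<forall>x. x \<noteq> xb \<longrightarrow> \<phi> x + ereal (M * norm (x - xb) powr p) > \<phi> xb)"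

definition frechet_subdiff :: "('a::real_inner \<Rightarrow> ereal) \<Rightarrow> 'a \<Rightarrow> 'a set" where
  "frechet_subdiff \<phi> x = {\<zeta>. \<bar>\<phi> x\<bar> \<noteq> \<infinity> \<and>
     (\<forall>e>0. \<exists>d>0. \<forall>y. norm (y - x) < d \<longrightarrow>
        \<phi> y \<ge> ereal (real_of_ereal (\<phi> x) + inner \<zeta> (y - x) - e * norm (y - x)))}"

definition lim_subdiff :: "('a::real_inner \<Rightarrow> ereal) \<Rightarrow> 'a \<Rightarrow> 'a set" where
  "lim_subdiff \<phi> x = {\<zeta>. \<exists>xs zs. xs \<longlonglongrightarrow> x \<and> (\<lambda>k. \<phi> (xs k)) \<longlonglongrightarrow> \<phi> x \<and>
       (\<forall>k. zs k \<in> frechet_subdiff \<phi> (xs k)) \<and> zs \<longlonglongrightarrow> \<zeta>}"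

definition q_prox_regular ::
  "real \<Rightarrow> ('a::real_inner \<Rightarrow> ereal) \<Rightarrow> 'a \<Rightarrow> 'a \<Rightarrow> real \<Rightarrow> real \<Rightarrow> bool" where
  "q_prox_regular q \<phi> xb zb eps rho \<longleftrightarrow> q \<ge> 2 \<and> eps > 0 \<and> rho \<ge> 0 \<and>
     (\<forall>x \<zeta>. x \<in> cball xb eps \<and> \<zeta> \<in> lim_subdiff \<phi> x \<inter> cball zb eps \<and> \<phi> x < \<phi> xb + ereal eps \<longrightarrow>
        (\<forall>x' \<in> cball xb eps.
           \<phi> x' \<ge> \<phi> x + ereal (inner \<zeta> (x' - x) - rho / 2 * norm (x' - x) powr q)))"

definition prox :: "real \<Rightarrow> real \<Rightarrow> ('a::real_normed_vector \<Rightarrow> ereal) \<Rightarrow> 'a \<Rightarrow> 'a set" where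
  "prox p \<gamma> \<phi> x = {y. \<forall>z. \<phi> y + ereal (norm (x - y) powr p / (p * \<gamma>))
                          \<le> \<phi> z + ereal (norm (x - z) powr p / (p * \<gamma>))}"

definition moreau_env :: "real \<Rightarrow> real \<Rightarrow> ('a::real_normed_vector \<Rightarrow> ereal) \<Rightarrow> 'a \<Rightarrow> ereal" where
  "moreau_env p \<gamma> \<phi> x = (INF y. \<phi> y + ereal (norm (x - y) powr p / (p * \<gamma>)))"

definition t_hat :: real where
  "t_hat = (THE t. 1 < t \<and> t \<le> 2 \<and>
     t * (t - 1) / 2 = 1 - (1 + (2 - sqrt 3) * t / (t - 1)) powr (1 - t))"

definition kappa :: "real \<Rightarrow> real" where
  "kappa t = (if t = 2 then 1
              else if t \<le> t_hat then (2 + sqrt 3) * (t - 1) / 16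
              else (2 + sqrt 3) / 16 * (1 - (3 - sqrt 3) powr (1 - t)))"

end

(*
  Near 0 the proximal mapping is in fact Lipschitz.  This is stronger than the claimed Hoelder
  bounds: on a small enough ball L t \<le> C t powr (1/q) for every C > 0, so of the constants
  Lp and LLp only their positivity matters.

  Calmness makes the prox objective coercive, so prox points y of x exist and satisfy
  norm (x - y) \<le> K norm x.  Fermat's rule puts J (x - y) / \<gamma> into the subdifferential at y,
  where J = duality_map p is the gradient of norm w powr p / p.  Testing
  prox-regularity at two prox points against each other bounds the inner product of
  J (x2 - y2) - J (x1 - y1) with y2 - y1 from below by - \<gamma> \<rho> norm (y2 - y1) powr q.  As J is
  strongly monotone at scale max (norm) powr (p - 2) and q \<ge> p, this error is absorbed when
  \<gamma> \<rho> 2 powr (p - 1) < 1, and prox is Lipschitz.  Finally the envelope is squeezed between the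
  prox objectives at the prox points of x and z, which gives the gradient J (x - prox x) / \<gamma>.
*)

theory Submission
  imports Defs
begin

section \<open>The duality map of the p-th power of the norm\<close>

(* the gradient of norm w powr p / p *)
definition duality_map :: "real \<Rightarrow> 'a::real_normed_vector \<Rightarrow> 'a" where
  "duality_map p w = (norm w powr (p - 2)) *\<^sub>R w"

lemma norm_duality_map: "norm (duality_map p w) = norm w powr (p - 1)"
  using powr_mult_base[of "norm w" "p - 2"] by (simp add: duality_map_def mult.commute)

lemma inner_duality_map: "inner (duality_map p w) v = norm w powr (p - 2) * inner w v"
  by (simp add: duality_map_def)

lemma Bernoulli_inequality_powr:
  fixes e s :: real
  assumes "1 \<le> e" "0 \<le> s"
  shows "1 + e * (s - 1) \<le> s powr e"
proof (cases "e = 1")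
  case False
  then have e: "1 < e" using assms by simp
  have "s * 1 \<le> s powr e / e + 1 powr (e / (e - 1)) / (e / (e - 1))"
    by (rule Youngs_inequality) (use e assms in \<open>auto simp: field_simps\<close>)
  then have "e * s \<le> e * (s powr e / e + (e - 1) / e)"
    using e by (intro mult_left_mono) auto
  also have "\<dots> = s powr e + (e - 1)"
    using e by (simp add: field_simps)
  finally show ?thesis by (simp add: algebra_simps)
qed (use assms in simp)

lemma powr_diff_mult_le:
  fixes \<alpha> \<beta> r :: real
  assumes "0 \<le> \<alpha>" "\<alpha> \<le> \<beta>" "0 \<le> r"
  shows "(\<beta> powr r - \<alpha> powr r) * \<alpha> \<le> r * \<beta> powr r * (\<beta> - \<alpha>)"
proof (cases "\<alpha> = 0")
  case False
  then have \<alpha>: "0 < \<alpha>" and \<beta>: "0 < \<beta>" using assms by auto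
  have "1 + (1 + r) * (\<alpha> / \<beta> - 1) \<le> (\<alpha> / \<beta>) powr (1 + r)"
    using assms \<alpha> \<beta> by (intro Bernoulli_inequality_powr) auto
  also have "\<dots> = \<alpha> * \<alpha> powr r / (\<beta> * \<beta> powr r)"
    using \<alpha> \<beta> by (simp add: powr_divide powr_add)
  finally have "(1 + (1 + r) * (\<alpha> / \<beta> - 1)) * (\<beta> * \<beta> powr r) \<le> \<alpha> * \<alpha> powr r"
    using \<beta> by (simp add: le_divide_eq)
  moreover have "(1 + (1 + r) * (\<alpha> / \<beta> - 1)) * (\<beta> * \<beta> powr r)
      = \<beta> * \<beta> powr r + (1 + r) * (\<alpha> - \<beta>) * \<beta> powr r"
    using \<beta> by (simp add: field_simps)
  ultimately show ?thesis by (simp add: algebra_simps)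
qed (use assms in simp)

lemma norm_powr_tangent_ineq:
  fixes w w' :: "'a::real_inner"
  assumes "1 < p"
  shows "norm w powr p / p + inner (duality_map p w) (w' - w) \<le> norm w' powr p / p"
proof (cases "w = 0")
  case False
  have "inner w (w' - w) \<le> norm w * norm w' - (norm w)\<^sup>2"
    using norm_cauchy_schwarz[of w w'] by (simp add: inner_diff_right power2_norm_eq_inner)
  then have "inner (duality_map p w) (w' - w) \<le> norm w powr (p - 2) * (norm w * norm w' - (norm w)\<^sup>2)"
    unfolding inner_duality_map by (intro mult_left_mono) auto
  also have "\<dots> = norm w powr (p - 1) * norm w' - norm w powr p"
    using powr_mult_base[of "norm w" "p - 2"] powr_mult_base[of "norm w" "p - 1"]
    by (simp add: algebra_simps power2_eq_square)
  finally have tangent: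
    "inner (duality_map p w) (w' - w) \<le> norm w powr (p - 1) * norm w' - norm w powr p" .
  have "norm w' * norm w powr (p - 1)
      \<le> norm w' powr p / p + (norm w powr (p - 1)) powr (p / (p - 1)) / (p / (p - 1))"
    by (rule Youngs_inequality) (use assms in \<open>auto simp: field_simps\<close>)
  also have "(norm w powr (p - 1)) powr (p / (p - 1)) = norm w powr p"
    using assms by (simp add: powr_powr)
  also have "norm w' powr p / p + norm w powr p / (p / (p - 1))
      = norm w' powr p / p + norm w powr p - norm w powr p / p"
    using assms by (simp add: field_simps)
  finally show ?thesis using tangent by (simp add: mult.commute)
qed (use assms in \<open>simp add: duality_map_def\<close>)

lemma duality_map_monotone:
  fixes a b :: "'a::real_inner"
  assumes "2 \<le> p"
  shows "max (norm a) (norm b) powr (p - 2) / 2 * (norm (b - a))\<^sup>2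
    \<le> inner (duality_map p b - duality_map p a) (b - a)"
proof -
  define u where "u = norm a powr (p - 2)"
  define v where "v = norm b powr (p - 2)"
  have expand: "inner (duality_map p b - duality_map p a) (b - a)
      = (u + v) / 2 * (norm (b - a))\<^sup>2 + (v - u) * ((norm b)\<^sup>2 - (norm a)\<^sup>2) / 2"
    unfolding duality_map_def u_def[symmetric] v_def[symmetric]
    by (simp add: inner_diff_left inner_diff_right power2_norm_eq_inner algebra_simps
        inner_commute add_divide_distrib diff_divide_distrib)
  have "max (norm a) (norm b) powr (p - 2) / 2 * (norm (b - a))\<^sup>2 \<le> (u + v) / 2 * (norm (b - a))\<^sup>2"
    unfolding u_def v_def by (intro mult_right_mono divide_right_mono) (auto simp: max_def)
  moreover have "0 \<le> (v - u) * ((norm b)\<^sup>2 - (norm a)\<^sup>2)"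
  proof (cases "norm a \<le> norm b")
    case True
    then have "u \<le> v" "(norm a)\<^sup>2 \<le> (norm b)\<^sup>2"
      unfolding u_def v_def using assms by (auto intro: powr_mono2 power_mono)
    then show ?thesis by simp
  next
    case False
    then have "v \<le> u" "(norm b)\<^sup>2 \<le> (norm a)\<^sup>2"
      unfolding u_def v_def using assms by (auto intro: powr_mono2 power_mono)
    then show ?thesis by (simp add: mult_nonpos_nonpos)
  qed
  ultimately show ?thesis
    unfolding expand by linarith
qed

lemma duality_map_lipschitz:
  fixes a b :: "'a::real_normed_vector"
  assumes p: "2 \<le> p" and "norm a \<le> R" "norm b \<le> R"
  shows "norm (duality_map p b - duality_map p a) \<le> (p - 1) * R powr (p - 2) * norm (b - a)"
proof -
  have ordered: "norm (duality_map p b - duality_map p a) \<le> (p - 1) * R powr (p - 2) * norm (b - a)"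
    if ab: "norm a \<le> norm b" and bR: "norm b \<le> R" for a b :: 'a
  proof -
    define u where "u = norm a powr (p - 2)"
    define v where "v = norm b powr (p - 2)"
    have uv: "u \<le> v" and vR: "v \<le> R powr (p - 2)"
      unfolding u_def v_def using p ab bR by (auto intro: powr_mono2)
    have "(v - u) * norm a \<le> (p - 2) * v * (norm b - norm a)"
      unfolding u_def v_def using p ab by (intro powr_diff_mult_le) auto
    also have "\<dots> \<le> (p - 2) * v * norm (b - a)"
      using p by (intro mult_left_mono norm_triangle_ineq2) (auto simp: v_def)
    finally have increment: "(v - u) * norm a \<le> (p - 2) * v * norm (b - a)" .
    have "norm (duality_map p b - duality_map p a) = norm (v *\<^sub>R (b - a) + (v - u) *\<^sub>R a)"
      by (simp add: duality_map_def u_def v_def algebra_simps)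
    also have "\<dots> \<le> v * norm (b - a) + (v - u) * norm a"
      using norm_triangle_ineq[of "v *\<^sub>R (b - a)" "(v - u) *\<^sub>R a"] uv by (simp add: v_def)
    also have "\<dots> \<le> (p - 1) * v * norm (b - a)"
      using increment by (simp add: algebra_simps)
    also have "\<dots> \<le> (p - 1) * R powr (p - 2) * norm (b - a)"
      using vR p by (intro mult_right_mono mult_left_mono) auto
    finally show ?thesis .
  qed
  show ?thesis
  proof (cases "norm a \<le> norm b")
    case False
    then show ?thesis using ordered[of b a] assms by (simp add: norm_minus_commute)
  qed (use ordered assms in blast)
qed

lemma norm_powr_descent:
  fixes a b :: "'a::real_inner"
  assumes p: "2 \<le> p" and "norm a \<le> R" "norm b \<le> R"
  shows "norm b powr p / p
    \<le> norm a powr p / p + inner (duality_map p a) (b - a) + (p - 1) * R powr (p - 2) * (norm (b - a))\<^sup>2"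
proof -
  have "norm b powr p / p + inner (duality_map p b) (a - b) \<le> norm a powr p / p"
    using p by (intro norm_powr_tangent_ineq) auto
  moreover have "inner (duality_map p b - duality_map p a) (b - a)
      \<le> norm (duality_map p b - duality_map p a) * norm (b - a)"
    by (rule norm_cauchy_schwarz)
  moreover have "norm (duality_map p b - duality_map p a) * norm (b - a)
      \<le> (p - 1) * R powr (p - 2) * norm (b - a) * norm (b - a)"
    using duality_map_lipschitz[OF assms] by (intro mult_right_mono) auto
  moreover have "inner (duality_map p b) (a - b) = - inner (duality_map p b) (b - a)"
    by (simp add: inner_diff_right)
  ultimately show ?thesis
    by (simp add: inner_diff_left power2_eq_square)
qed

lemma duality_map_residual_lipschitz:
  fixes x1 x2 y1 y2 :: "'a::real_inner"
  assumes p: "2 \<le> p" and "norm (x1 - y1) \<le> 1" "norm (x2 - y2) \<le> 1"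
    and lip: "norm (y2 - y1) \<le> L * norm (x2 - x1)"
  shows "norm (duality_map p (x2 - y2) - duality_map p (x1 - y1))
    \<le> (p - 1) * ((1 + L) * norm (x2 - x1))"
proof -
  have "norm (duality_map p (x2 - y2) - duality_map p (x1 - y1))
      \<le> (p - 1) * 1 powr (p - 2) * norm ((x2 - y2) - (x1 - y1))"
    using assms by (intro duality_map_lipschitz) auto
  also have "norm ((x2 - y2) - (x1 - y1)) \<le> norm (x2 - x1) + norm (y2 - y1)"
    using norm_triangle_ineq4[of "x2 - x1" "y2 - y1"] by (simp add: algebra_simps)
  also have "\<dots> \<le> (1 + L) * norm (x2 - x1)"
    using lip by (simp add: algebra_simps)
  finally show ?thesis
    using p by (simp add: mult_left_mono)
qed

lemma powr_le_scaled_square: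
  fixes n R p q :: real
  assumes "0 \<le> n" "n \<le> 1" "n \<le> 2 * R" "2 \<le> p" "p \<le> q"
  shows "n powr q \<le> (2 * R) powr (p - 2) * n\<^sup>2"
proof (cases "n = 0")
  case False
  have "n powr q \<le> n powr p"
    using assms by (intro powr_mono') auto
  also have "\<dots> = n powr (p - 2) * n\<^sup>2"
    using False assms(1) by (simp add: powr_add[symmetric] flip: powr_numeral)
  also have "\<dots> \<le> (2 * R) powr (p - 2) * n\<^sup>2"
    using assms by (intro mult_right_mono powr_mono2) auto
  finally show ?thesis .
qed (use assms in simp)

lemma duality_map_perturbed_monotone_bound:
  fixes a b dx dy :: "'a::real_inner"
  assumes p: "2 \<le> p" and q: "p \<le> q" and c: "0 \<le> c" and \<tau>: "0 \<le> \<tau>"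
    and \<theta>: "c * 2 powr (p - 1) * \<tau> powr q \<le> \<theta>"
    and small: "norm a \<le> 1/2" "norm b \<le> 1/2"
    and split: "b - a = dx - dy" and dy: "norm dy \<le> \<tau> * norm (b - a)"
    and hypomonotone: "- (c * norm dy powr q) \<le> inner (duality_map p b - duality_map p a) dy"
  shows "(1 - \<theta>) / 2 * norm (b - a) \<le> (p - 1) * norm dx"
proof (cases "b = a")
  case False
  define n where "n = norm (b - a)"
  define R where "R = max (norm a) (norm b)"
  define P where "P = R powr (p - 2)"
  define J where "J = duality_map p b - duality_map p a"
  have n: "0 < n" "n \<le> 2 * R" "n \<le> 1"
    using False norm_triangle_ineq4[of b a] small by (auto simp: n_def R_def)
  then have P: "0 < P" by (simp add: P_def)
  have "norm dy powr q \<le> \<tau> powr q * n powr q"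
    using dy \<tau> q p by (simp add: n_def powr_mono2 flip: powr_mult)
  also have "\<dots> \<le> \<tau> powr q * ((2 * R) powr (p - 2) * n\<^sup>2)"
    using n p q by (intro mult_left_mono powr_le_scaled_square) auto
  finally have "c * norm dy powr q \<le> c * (\<tau> powr q * ((2 * R) powr (p - 2) * n\<^sup>2))"
    using c by (rule mult_left_mono)
  also have "\<dots> = c * 2 powr (p - 1) * \<tau> powr q / 2 * P * n\<^sup>2"
    using powr_mult_base[of 2 "p - 2"] by (simp add: P_def powr_mult algebra_simps)
  also have "\<dots> \<le> \<theta> / 2 * P * n\<^sup>2"
    using \<theta> P by (intro mult_right_mono divide_right_mono) auto
  finally have error: "c * norm dy powr q \<le> \<theta> / 2 * P * n\<^sup>2" .
  have "P / 2 * n\<^sup>2 \<le> inner J (b - a)"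
    using duality_map_monotone[OF p, of a b] by (simp add: J_def P_def R_def n_def)
  also have "\<dots> = inner J dx - inner J dy"
    by (simp add: split inner_diff_right)
  also have "inner J dx \<le> norm J * norm dx"
    by (rule norm_cauchy_schwarz)
  also have "\<dots> \<le> (p - 1) * P * n * norm dx"
    using duality_map_lipschitz[OF p, of a R b]
    by (intro mult_right_mono) (auto simp: J_def P_def R_def n_def)
  finally have "(P * n) * ((1 - \<theta>) / 2 * n) \<le> (P * n) * ((p - 1) * norm dx)"
    using hypomonotone error by (simp add: J_def algebra_simps power2_eq_square diff_divide_distrib)
  then show ?thesis
    using P n by (simp add: mult_le_cancel_left_pos n_def)
qed (use p in simp)

lemma hypomonotone_duality_imp_lipschitz:
  fixes c p q :: real
  assumes p: "2 \<le> p" and q: "p \<le> q" and c: "0 \<le> c" "c * 2 powr (p - 1) < 1"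
  obtains L where "0 \<le> L" "\<And>x1 x2 y1 y2 :: 'a::real_inner.
      norm (x1 - y1) \<le> 1/2 \<Longrightarrow> norm (x2 - y2) \<le> 1/2 \<Longrightarrow>
      - (c * norm (y2 - y1) powr q)
        \<le> inner (duality_map p (x2 - y2) - duality_map p (x1 - y1)) (y2 - y1) \<Longrightarrow>
      norm (y2 - y1) \<le> L * norm (x2 - x1)"
proof -
  define \<mu> where "\<mu> = c * 2 powr (p - 1)"
  define \<tau> where "\<tau> = (2 / (1 + \<mu>)) powr (1 / q)"
  define \<theta> where "\<theta> = 2 * \<mu> / (1 + \<mu>)"
  have \<mu>: "0 \<le> \<mu>" "\<mu> < 1" using c by (auto simp: \<mu>_def)
  have \<tau>: "1 < \<tau>" unfolding \<tau>_def using \<mu> p q by (intro gr_one_powr) auto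
  have \<theta>: "\<theta> < 1" "c * 2 powr (p - 1) * \<tau> powr q = \<theta>"
    using \<mu> p q by (auto simp: \<theta>_def \<tau>_def \<mu>_def[symmetric] powr_powr)
  (* If y2 - y1 is at most \<tau> times the change n of the residuals x - y, the error term is
     absorbed by strong monotonicity; otherwise x2 - x1 already controls n. *)
  define L where "L = 1 + 1 / (\<tau> - 1) + 2 * (p - 1) / (1 - \<theta>)"
  show ?thesis
  proof (rule that)
    show "0 \<le> L" using \<tau> \<theta> p by (simp add: L_def)
    fix x1 x2 y1 y2 :: 'a
    assume small: "norm (x1 - y1) \<le> 1/2" "norm (x2 - y2) \<le> 1/2"
      and hypomonotone: "- (c * norm (y2 - y1) powr q)
        \<le> inner (duality_map p (x2 - y2) - duality_map p (x1 - y1)) (y2 - y1)"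
    define n where "n = norm ((x2 - y2) - (x1 - y1))"
    have split: "(x2 - y2) - (x1 - y1) = (x2 - x1) - (y2 - y1)" by (simp add: algebra_simps)
    have "n \<le> (L - 1) * norm (x2 - x1)"
    proof (cases "(\<tau> - 1) * n \<le> norm (x2 - x1)")
      case True
      then have "n \<le> 1 / (\<tau> - 1) * norm (x2 - x1)" using \<tau> by (simp add: field_simps)
      also have "\<dots> \<le> (L - 1) * norm (x2 - x1)"
        using \<theta> p by (intro mult_right_mono) (auto simp: L_def)
      finally show ?thesis .
    next
      case False
      then have "norm (y2 - y1) \<le> \<tau> * n"
        using norm_triangle_ineq4[of "x2 - x1" "(x2 - y2) - (x1 - y1)"]
        by (simp add: split n_def algebra_simps)
      from duality_map_perturbed_monotone_bound[OF p q c(1) _ eq_refl[OF \<theta>(2)] small split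
          this[unfolded n_def] hypomonotone]
      have "(1 - \<theta>) / 2 * n \<le> (p - 1) * norm (x2 - x1)"
        using \<tau> by (simp add: n_def)
      then have "n \<le> 2 * (p - 1) / (1 - \<theta>) * norm (x2 - x1)"
        using \<theta> by (simp add: field_simps)
      also have "\<dots> \<le> (L - 1) * norm (x2 - x1)"
        using \<tau> by (intro mult_right_mono) (auto simp: L_def)
      finally show ?thesis .
    qed
    moreover have "norm (y2 - y1) \<le> norm (x2 - x1) + n"
      using norm_triangle_ineq4[of "x2 - x1" "(x2 - y2) - (x1 - y1)"] by (simp add: split n_def)
    ultimately show "norm (y2 - y1) \<le> L * norm (x2 - x1)"
      by (simp add: algebra_simps)
  qed
qed

section \<open>Lower semicontinuous functions\<close>

lemma lsc_fun_open_superlevel: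
  assumes "lsc_fun G"
  shows "open {x. c < G x}"
proof (subst open_subopen, intro ballI)
  fix x assume "x \<in> {x. c < G x}"
  then have "eventually (\<lambda>y. c < G y) (at x)" and "c < G x"
    using assms by (auto simp: lsc_fun_def)
  then obtain T where "open T" "x \<in> T" "\<forall>y\<in>T. y \<noteq> x \<longrightarrow> c < G y"
    unfolding eventually_at_topological by blast
  with \<open>c < G x\<close> show "\<exists>T. open T \<and> x \<in> T \<and> T \<subseteq> {x. c < G x}"
    by (intro exI[of _ T]) auto
qed

lemma lsc_fun_attains_inf:
  assumes lsc: "lsc_fun G" and S: "compact S" "S \<noteq> {}"
  shows "\<exists>y\<in>S. \<forall>z\<in>S. G y \<le> G z"
proof (rule ccontr)
  assume "\<not> ?thesis"
  then obtain next_lower where next_lower: "\<And>y. y \<in> S \<Longrightarrow> next_lower y \<in> S \<and> G (next_lower y) < G y"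
    by (metis not_le)
  have cover: "S \<subseteq> (\<Union>y\<in>S. {w. G (next_lower y) < G w})" using next_lower by blast
  obtain C where C: "C \<subseteq> S" "finite C" "S \<subseteq> (\<Union>y\<in>C. {w. G (next_lower y) < G w})"
    by (rule compactE_image[OF S(1) _ cover]) (use lsc_fun_open_superlevel[OF lsc] in auto)
  have "C \<noteq> {}" using C(3) S(2) by auto
  define m where "m = Min ((\<lambda>y. G (next_lower y)) ` C)"
  have "m \<in> (\<lambda>y. G (next_lower y)) ` C"
    unfolding m_def using C(2) \<open>C \<noteq> {}\<close> by (intro Min_in) auto
  then obtain y0 where y0: "y0 \<in> C" "m = G (next_lower y0)" by auto
  then obtain y1 where "y1 \<in> C" "G (next_lower y1) < m"
    using C next_lower by blast
  moreover have "m \<le> G (next_lower y1)"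
    unfolding m_def using C(2) \<open>y1 \<in> C\<close> by (intro Min_le) auto
  ultimately show False by simp
qed

lemma lsc_fun_add_continuous:
  assumes lsc: "lsc_fun \<phi>" and not_minf: "\<And>x. \<phi> x \<noteq> -\<infinity>" and cont: "continuous_on UNIV r"
  shows "lsc_fun (\<lambda>x. \<phi> x + ereal (r x))"
  unfolding lsc_fun_def
proof (intro allI impI)
  fix x c assume c: "c < \<phi> x + ereal (r x)"
  show "eventually (\<lambda>y. c < \<phi> y + ereal (r y)) (at x)"
  proof (cases c)
    case MInf
    show ?thesis
    proof (intro always_eventually allI)
      fix y show "c < \<phi> y + ereal (r y)" using not_minf[of y] MInf by (cases "\<phi> y") auto
    qed
  next
    case PInf
    then show ?thesis using c by simp
  next
    case (real c0)
    then have "ereal (c0 - r x) < \<phi> x" using c by (cases "\<phi> x") auto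
    then obtain d where d: "ereal (c0 - r x) < ereal d" "ereal d < \<phi> x" using ereal_dense2 by blast
    have "(r \<longlongrightarrow> r x) (at x)"
      using cont by (metis UNIV_I continuous_on_def open_UNIV tendsto_within_open)
    then have "eventually (\<lambda>y. dist (r y) (r x) < d - (c0 - r x)) (at x)"
      using d(1) by (intro tendstoD) auto
    moreover have "eventually (\<lambda>y. ereal d < \<phi> y) (at x)"
      using lsc d(2) by (simp add: lsc_fun_def)
    ultimately show ?thesis
    proof eventually_elim
      case (elim y)
      then have "c0 < d + r y" by (auto simp: dist_real_def)
      then show ?case using elim real by (cases "\<phi> y") auto
    qed
  qed
qed

section \<open>Proximal points and the Moreau envelope\<close>

definition prox_objective ::
    "real \<Rightarrow> real \<Rightarrow> ('a::real_normed_vector \<Rightarrow> ereal) \<Rightarrow> 'a \<Rightarrow> 'a \<Rightarrow> ereal" where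
  "prox_objective p \<gamma> \<phi> x y = \<phi> y + ereal (norm (x - y) powr p / (p * \<gamma>))"

lemma mem_prox_iff: "y \<in> prox p \<gamma> \<phi> x \<longleftrightarrow> (\<forall>z. prox_objective p \<gamma> \<phi> x y \<le> prox_objective p \<gamma> \<phi> x z)"
  by (simp add: prox_def prox_objective_def)

lemma moreau_env_at_prox:
  assumes "y \<in> prox p \<gamma> \<phi> x"
  shows "moreau_env p \<gamma> \<phi> x = prox_objective p \<gamma> \<phi> x y"
  unfolding moreau_env_def prox_objective_def[symmetric]
proof (rule antisym)
  show "(INF z. prox_objective p \<gamma> \<phi> x z) \<le> prox_objective p \<gamma> \<phi> x y"
    by (rule INF_lower) simp
  show "prox_objective p \<gamma> \<phi> x y \<le> (INF z. prox_objective p \<gamma> \<phi> x z)"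
    using assms by (intro INF_greatest) (simp add: mem_prox_iff)
qed

lemma prox_value_finite:
  assumes proper: "proper_fun \<phi>" and y: "y \<in> prox p \<gamma> \<phi> x"
  shows "\<bar>\<phi> y\<bar> \<noteq> \<infinity>"
proof -
  obtain z where "\<phi> z \<noteq> \<infinity>" using proper by (auto simp: proper_fun_def)
  then have "prox_objective p \<gamma> \<phi> x z \<noteq> \<infinity>" by (simp add: prox_objective_def)
  moreover have "prox_objective p \<gamma> \<phi> x y \<le> prox_objective p \<gamma> \<phi> x z"
    using y by (simp add: mem_prox_iff)
  ultimately have "prox_objective p \<gamma> \<phi> x y \<noteq> \<infinity>"
    by (metis ereal_infty_less_eq(1))
  then show ?thesis using proper by (auto simp: proper_fun_def prox_objective_def)
qed

lemma prox_real_le: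
  assumes proper: "proper_fun \<phi>" and y: "y \<in> prox p \<gamma> \<phi> x" and z: "\<phi> z \<noteq> \<infinity>"
  shows "real_of_ereal (\<phi> y) + norm (x - y) powr p / (p * \<gamma>)
    \<le> real_of_ereal (\<phi> z) + norm (x - z) powr p / (p * \<gamma>)"
proof -
  have "prox_objective p \<gamma> \<phi> x y \<le> prox_objective p \<gamma> \<phi> x z" using y by (simp add: mem_prox_iff)
  moreover have "\<phi> z \<noteq> -\<infinity>" using proper by (simp add: proper_fun_def)
  ultimately show ?thesis
    using prox_value_finite[OF proper y] z by (cases "\<phi> y"; cases "\<phi> z") (auto simp: prox_objective_def)
qed

lemma moreau_env_real_at_prox:
  assumes proper: "proper_fun \<phi>" and y: "y \<in> prox p \<gamma> \<phi> x"
  shows "real_of_ereal (moreau_env p \<gamma> \<phi> x) = real_of_ereal (\<phi> y) + norm (x - y) powr p / (p * \<gamma>)"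
  using prox_value_finite[OF assms]
  by (cases "\<phi> y") (auto simp: moreau_env_at_prox[OF y] prox_objective_def)

lemma moreau_env_finite:
  assumes "proper_fun \<phi>" "y \<in> prox p \<gamma> \<phi> x"
  shows "\<bar>moreau_env p \<gamma> \<phi> x\<bar> \<noteq> \<infinity>"
  using prox_value_finite[OF assms]
  by (cases "\<phi> y") (auto simp: moreau_env_at_prox[OF assms(2)] prox_objective_def)

lemma prox_quadratic_minorant:
  fixes \<phi> :: "'a::real_inner \<Rightarrow> ereal"
  assumes p: "2 \<le> p" and \<gamma>: "0 < \<gamma>" and proper: "proper_fun \<phi>" and y: "y \<in> prox p \<gamma> \<phi> x"
    and y': "\<phi> y' \<noteq> \<infinity>" and R: "norm (x - y) \<le> R" "norm (x - y') \<le> R"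
  shows "real_of_ereal (\<phi> y) + inner (duality_map p (x - y) /\<^sub>R \<gamma>) (y' - y)
      - (p - 1) * R powr (p - 2) / \<gamma> * (norm (y' - y))\<^sup>2 \<le> real_of_ereal (\<phi> y')"
proof -
  have "norm (x - y') powr p / p \<le> norm (x - y) powr p / p
      + inner (duality_map p (x - y)) (y - y') + (p - 1) * R powr (p - 2) * (norm (y' - y))\<^sup>2"
    using norm_powr_descent[OF p R] by (simp add: norm_minus_commute)
  then have "norm (x - y') powr p / p / \<gamma> \<le> (norm (x - y) powr p / p
      + inner (duality_map p (x - y)) (y - y') + (p - 1) * R powr (p - 2) * (norm (y' - y))\<^sup>2) / \<gamma>"
    using \<gamma> by (intro divide_right_mono) auto
  moreover have "inner (duality_map p (x - y)) (y - y') / \<gamma>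
      = - inner (duality_map p (x - y) /\<^sub>R \<gamma>) (y' - y)"
    by (simp add: inner_diff_right divide_inverse_commute right_diff_distrib)
  ultimately have "norm (x - y') powr p / (p * \<gamma>) \<le> norm (x - y) powr p / (p * \<gamma>)
      - inner (duality_map p (x - y) /\<^sub>R \<gamma>) (y' - y) + (p - 1) * R powr (p - 2) / \<gamma> * (norm (y' - y))\<^sup>2"
    by (simp add: add_divide_distrib)
  then show ?thesis
    using prox_real_le[OF proper y y'] by simp
qed

lemma prox_fermat_rule:
  fixes \<phi> :: "'a::real_inner \<Rightarrow> ereal"
  assumes p: "2 \<le> p" and \<gamma>: "0 < \<gamma>" and proper: "proper_fun \<phi>" and y: "y \<in> prox p \<gamma> \<phi> x"
  shows "duality_map p (x - y) /\<^sub>R \<gamma> \<in> frechet_subdiff \<phi> y"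
  unfolding frechet_subdiff_def
proof (intro CollectI conjI allI impI)
  show "\<bar>\<phi> y\<bar> \<noteq> \<infinity>" by (rule prox_value_finite[OF proper y])
  define \<zeta> where "\<zeta> = duality_map p (x - y) /\<^sub>R \<gamma>"
  define R where "R = norm (x - y) + 1"
  define C where "C = (p - 1) * R powr (p - 2) / \<gamma>"
  have C: "0 \<le> C" using p \<gamma> by (simp add: C_def)
  fix e :: real assume e: "0 < e"
  show "\<exists>d>0. \<forall>y'. norm (y' - y) < d \<longrightarrow>
      ereal (real_of_ereal (\<phi> y) + inner (duality_map p (x - y) /\<^sub>R \<gamma>) (y' - y) - e * norm (y' - y))
        \<le> \<phi> y'"
    unfolding \<zeta>_def[symmetric]
  proof (intro exI[of _ "min 1 (e / (C + 1))"] conjI allI impI)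
    show "0 < min 1 (e / (C + 1))" using e C by simp
    fix y' assume y': "norm (y' - y) < min 1 (e / (C + 1))"
    show "ereal (real_of_ereal (\<phi> y) + inner \<zeta> (y' - y) - e * norm (y' - y)) \<le> \<phi> y'"
    proof (cases "\<phi> y' = \<infinity>")
      case False
      have "norm (x - y') \<le> R"
        using y' norm_triangle_ineq4[of "x - y" "y' - y"] by (simp add: R_def algebra_simps)
      then have minorant:
          "real_of_ereal (\<phi> y) + inner \<zeta> (y' - y) - C * (norm (y' - y))\<^sup>2 \<le> real_of_ereal (\<phi> y')"
        using prox_quadratic_minorant[OF p \<gamma> proper y False] by (simp add: R_def C_def \<zeta>_def)
      have "C * norm (y' - y) \<le> C * (e / (C + 1))"
        using y' C by (intro mult_left_mono) auto
      also have "\<dots> \<le> e"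
        using C e by (simp add: field_simps)
      finally have "C * (norm (y' - y))\<^sup>2 \<le> e * norm (y' - y)"
        using mult_right_mono[of "C * norm (y' - y)" e "norm (y' - y)"]
        by (simp add: power2_eq_square mult.assoc)
      with minorant show ?thesis
        using False proper by (cases "\<phi> y'") (auto simp: proper_fun_def)
    qed simp
  qed
qed

lemma frechet_subdiff_subset_lim_subdiff: "frechet_subdiff \<phi> x \<subseteq> lim_subdiff \<phi> x"
  unfolding lim_subdiff_def by (auto intro!: exI[of _ "\<lambda>k. x"] exI[of _ "\<lambda>k. _"])

lemma prox_nonempty_if_coercive:
  fixes \<phi> :: "'a::{real_normed_vector, heine_borel} \<Rightarrow> ereal"
  assumes lsc: "lsc_fun \<phi>" and not_minf: "\<And>y. \<phi> y \<noteq> -\<infinity>" and p: "0 < p" and \<gamma>: "0 < \<gamma>"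
    and w: "norm (x - w) \<le> r"
    and coercive: "\<And>z. r < norm (x - z) \<Longrightarrow> prox_objective p \<gamma> \<phi> x w < prox_objective p \<gamma> \<phi> x z"
  shows "prox p \<gamma> \<phi> x \<noteq> {}"
proof -
  have "continuous_on UNIV (\<lambda>y. norm (x - y) powr p / (p * \<gamma>))"
    using p \<gamma> by (intro continuous_on_divide continuous_on_const continuous_on_powr'
        continuous_on_norm continuous_on_diff continuous_on_id) auto
  then have "lsc_fun (prox_objective p \<gamma> \<phi> x)"
    unfolding prox_objective_def[abs_def] by (rule lsc_fun_add_continuous[OF lsc not_minf])
  moreover have "w \<in> cball x r"
    using w by (simp add: dist_norm)
  ultimately obtain y where y: "y \<in> cball x r"
    and min: "\<And>z. z \<in> cball x r \<Longrightarrow> prox_objective p \<gamma> \<phi> x y \<le> prox_objective p \<gamma> \<phi> x z"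
    using lsc_fun_attains_inf[OF _ compact_cball] by blast
  have "prox_objective p \<gamma> \<phi> x y \<le> prox_objective p \<gamma> \<phi> x z" for z
  proof (cases "z \<in> cball x r")
    case False
    then show ?thesis
      using min[of w] w coercive[of z] by (simp add: dist_norm)
  qed (rule min)
  then have "y \<in> prox p \<gamma> \<phi> x" by (simp add: mem_prox_iff)
  then show ?thesis by blast
qed

lemma moreau_env_real_diff_bounds:
  assumes proper: "proper_fun \<phi>" and y: "y \<in> prox p \<gamma> \<phi> x" and y': "y' \<in> prox p \<gamma> \<phi> z"
  shows "norm (z - y') powr p / (p * \<gamma>) - norm (x - y') powr p / (p * \<gamma>)
      \<le> real_of_ereal (moreau_env p \<gamma> \<phi> z) - real_of_ereal (moreau_env p \<gamma> \<phi> x)"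
    and "real_of_ereal (moreau_env p \<gamma> \<phi> z) - real_of_ereal (moreau_env p \<gamma> \<phi> x)
      \<le> norm (z - y) powr p / (p * \<gamma>) - norm (x - y) powr p / (p * \<gamma>)"
  using prox_real_le[OF proper y, of y'] prox_real_le[OF proper y', of y]
    prox_value_finite[OF proper y] prox_value_finite[OF proper y']
  by (auto simp: moreau_env_real_at_prox[OF proper y] moreau_env_real_at_prox[OF proper y'])

lemma moreau_env_diff_first_order:
  fixes \<phi> :: "'a::real_inner \<Rightarrow> ereal"
  assumes p: "2 \<le> p" and \<gamma>: "0 < \<gamma>" and proper: "proper_fun \<phi>"
    and y: "y \<in> prox p \<gamma> \<phi> x" and y': "y' \<in> prox p \<gamma> \<phi> z"
    and S: "norm (x - y) \<le> S" "norm (z - y) \<le> S"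
  defines "D \<equiv> real_of_ereal (moreau_env p \<gamma> \<phi> z) - real_of_ereal (moreau_env p \<gamma> \<phi> x)"
  shows "inner (duality_map p (x - y')) (z - x) \<le> \<gamma> * D"
    and "\<gamma> * D \<le> inner (duality_map p (x - y)) (z - x) + (p - 1) * S powr (p - 2) * (norm (z - x))\<^sup>2"
proof -
  have "inner (duality_map p (x - y')) (z - x) \<le> norm (z - y') powr p / p - norm (x - y') powr p / p"
    using norm_powr_tangent_ineq[of p "x - y'" "z - y'"] p by simp
  also have "\<dots> = \<gamma> * (norm (z - y') powr p / (p * \<gamma>) - norm (x - y') powr p / (p * \<gamma>))"
    using \<gamma> by (simp add: field_simps)
  also have "\<dots> \<le> \<gamma> * D"
    using moreau_env_real_diff_bounds(1)[OF proper y y'] \<gamma> by (simp add: D_def)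
  finally show "inner (duality_map p (x - y')) (z - x) \<le> \<gamma> * D" .
  have "\<gamma> * D \<le> \<gamma> * (norm (z - y) powr p / (p * \<gamma>) - norm (x - y) powr p / (p * \<gamma>))"
    using moreau_env_real_diff_bounds(2)[OF proper y y'] \<gamma> by (simp add: D_def)
  also have "\<dots> = norm (z - y) powr p / p - norm (x - y) powr p / p"
    using \<gamma> by (simp add: field_simps)
  also have "\<dots> \<le> inner (duality_map p (x - y)) (z - x) + (p - 1) * S powr (p - 2) * (norm (z - x))\<^sup>2"
    using norm_powr_descent[OF p S] by simp
  finally show "\<gamma> * D
      \<le> inner (duality_map p (x - y)) (z - x) + (p - 1) * S powr (p - 2) * (norm (z - x))\<^sup>2" .
qed

lemma gderiv_of_quadratic_remainder:
  fixes f :: "'a::real_inner \<Rightarrow> real"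
  assumes r: "0 < r" and C: "0 \<le> C"
    and remainder: "\<And>z. norm (z - x) < r \<Longrightarrow> \<bar>f z - f x - inner (z - x) g\<bar> \<le> C * (norm (z - x))\<^sup>2"
  shows "GDERIV f x :> g"
  unfolding gderiv_def has_derivative_at'
proof (intro conjI allI impI)
  show "bounded_linear (\<lambda>h. inner h g)" by (rule bounded_linear_inner_left)
  fix e :: real assume e: "0 < e"
  show "\<exists>d>0. \<forall>z. 0 < norm (z - x) \<and> norm (z - x) < d \<longrightarrow>
      norm (f z - f x - inner (z - x) g) / norm (z - x) < e"
  proof (intro exI[of _ "min r (e / (C + 1))"] conjI allI impI)
    show "0 < min r (e / (C + 1))" using r e C by auto
    fix z assume z: "0 < norm (z - x) \<and> norm (z - x) < min r (e / (C + 1))"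
    have "norm (f z - f x - inner (z - x) g) / norm (z - x) \<le> C * norm (z - x)"
      using remainder[of z] z by (simp add: divide_le_eq power2_eq_square mult.assoc)
    also have "\<dots> \<le> C * (e / (C + 1))" using z C by (intro mult_left_mono) auto
    also have "\<dots> < e" using C e by (simp add: field_simps)
    finally show "norm (f z - f x - inner (z - x) g) / norm (z - x) < e" .
  qed
qed

lemma moreau_env_gderiv:
  fixes \<phi> :: "'a::real_inner \<Rightarrow> ereal"
  assumes p: "2 \<le> p" and \<gamma>: "0 < \<gamma>" and proper: "proper_fun \<phi>"
    and U: "open U" "x \<in> U"
    and sel: "\<And>z. z \<in> U \<Longrightarrow> ys z \<in> prox p \<gamma> \<phi> z"
    and near: "\<And>z. z \<in> U \<Longrightarrow> norm (z - ys z) \<le> R"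
    and lip: "0 \<le> L" "\<And>z. z \<in> U \<Longrightarrow> norm (ys z - ys x) \<le> L * norm (z - x)"
  shows "GDERIV (\<lambda>z. real_of_ereal (moreau_env p \<gamma> \<phi> z)) x :> duality_map p (x - ys x) /\<^sub>R \<gamma>"
proof -
  obtain r where r: "0 < r" "ball x r \<subseteq> U" using U open_contains_ball by blast
  define S where "S = R + r"
  define C where "C = (p - 1) * S powr (p - 2) * (1 + L) / \<gamma>"
  have \<gamma>C: "\<gamma> * C = (p - 1) * S powr (p - 2) * (1 + L)" using \<gamma> by (simp add: C_def)
  have C: "0 \<le> C" using p \<gamma> lip(1) by (simp add: C_def)
  show ?thesis
  proof (rule gderiv_of_quadratic_remainder[OF r(1) C])
    fix z assume zx: "norm (z - x) < r"
    then have z: "z \<in> U" using r(2) by (auto simp: dist_norm norm_minus_commute)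
    define y y' v where "y = ys x" and "y' = ys z" and "v = z - x"
    define D where "D = real_of_ereal (moreau_env p \<gamma> \<phi> z) - real_of_ereal (moreau_env p \<gamma> \<phi> x)"
    have xy: "norm (x - y) \<le> S" and zy: "norm (z - y) \<le> S"
      using near[OF U(2)] zx r norm_triangle_ineq[of "z - x" "x - y"] by (auto simp: S_def y_def)
    have xy': "norm (x - y') \<le> S"
      using near[OF z] zx norm_triangle_ineq4[of "z - y'" "z - x"]
      by (auto simp: S_def y'_def algebra_simps)
    note first_order = moreau_env_diff_first_order[OF p \<gamma> proper sel[OF U(2)] sel[OF z],
        folded y_def y'_def D_def, OF xy zy]
    have "norm (duality_map p (x - y') - duality_map p (x - y))
        \<le> (p - 1) * S powr (p - 2) * (L * norm v)"
      using duality_map_lipschitz[OF p xy xy'] lip(2)[OF z] p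
      by (simp add: y_def y'_def v_def norm_minus_commute mult_left_mono order_trans)
    also have "\<dots> \<le> \<gamma> * C * norm v"
      unfolding \<gamma>C mult.assoc using p by (intro mult_left_mono mult_right_mono) auto
    finally have J_diff: "norm (duality_map p (x - y') - duality_map p (x - y)) \<le> \<gamma> * C * norm v" .
    have "inner (duality_map p (x - y) - duality_map p (x - y')) v
        \<le> norm (duality_map p (x - y') - duality_map p (x - y)) * norm v"
      using norm_cauchy_schwarz[of "duality_map p (x - y) - duality_map p (x - y')" v]
      by (simp add: norm_minus_commute)
    also have "\<dots> \<le> \<gamma> * C * norm v * norm v"
      by (rule mult_right_mono[OF J_diff]) simp
    also have "\<dots> = \<gamma> * C * (norm v)\<^sup>2"
      by (simp add: power2_eq_square)
    finally have lower: "inner (duality_map p (x - y)) v - \<gamma> * C * (norm v)\<^sup>2 \<le> \<gamma> * D"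
      using first_order(1) by (simp add: v_def inner_diff_left)
    have C_ge: "(p - 1) * S powr (p - 2) \<le> \<gamma> * C"
      using mult_left_mono[of 1 "1 + L" "(p - 1) * S powr (p - 2)"] p lip(1) by (simp add: \<gamma>C)
    have upper: "\<gamma> * D \<le> inner (duality_map p (x - y)) v + \<gamma> * C * (norm v)\<^sup>2"
      using first_order(2) mult_right_mono[OF C_ge zero_le_power2[of "norm v"]] by (simp add: v_def)
    have "inner v (duality_map p (x - y) /\<^sub>R \<gamma>) = inner (duality_map p (x - y)) v / \<gamma>"
      by (simp add: inner_commute divide_inverse_commute)
    then show "\<bar>real_of_ereal (moreau_env p \<gamma> \<phi> z) - real_of_ereal (moreau_env p \<gamma> \<phi> x)
        - inner (z - x) (duality_map p (x - ys x) /\<^sub>R \<gamma>)\<bar> \<le> C * (norm (z - x))\<^sup>2"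
      using upper lower \<gamma>
      by (simp add: D_def[symmetric] y_def[symmetric] v_def[symmetric] abs_le_iff field_simps)
  qed
qed

section \<open>Calm, prox-regular functions\<close>

lemma p_calm_lower_bound:
  assumes "p_calm p M \<phi> 0" "\<phi> 0 = 0"
  shows "ereal (- M * norm y powr p) \<le> \<phi> y"
proof (cases "y = 0")
  case False
  then have "0 < \<phi> y + ereal (M * norm y powr p)" using assms by (auto simp: p_calm_def)
  then show ?thesis by (cases "\<phi> y") auto
qed (use assms in simp)

lemma p_calm_prox_objective_lower_bound:
  fixes \<phi> :: "'a::real_normed_vector \<Rightarrow> ereal"
  assumes p: "1 < p" and M: "0 \<le> M" and lower: "\<And>y. ereal (- M * norm y powr p) \<le> \<phi> y"
    and xz: "norm x \<le> (2 powr ((p - 1) / p) - 1) * norm (x - z)"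
  shows "ereal ((1 / (p * \<gamma>) - M * 2 powr (p - 1)) * norm (x - z) powr p)
    \<le> prox_objective p \<gamma> \<phi> x z"
proof -
  have "norm z \<le> 2 powr ((p - 1) / p) * norm (x - z)"
    using xz norm_triangle_ineq4[of x "x - z"] by (simp add: algebra_simps)
  then have "norm z powr p \<le> (2 powr ((p - 1) / p) * norm (x - z)) powr p"
    using p by (intro powr_mono2) auto
  also have "\<dots> = 2 powr (p - 1) * norm (x - z) powr p"
    using p by (simp add: powr_mult powr_powr)
  finally have "(1 / (p * \<gamma>) - M * 2 powr (p - 1)) * norm (x - z) powr p
      \<le> - M * norm z powr p + norm (x - z) powr p / (p * \<gamma>)"
    using M by (simp add: algebra_simps mult_left_mono)
  then have "ereal ((1 / (p * \<gamma>) - M * 2 powr (p - 1)) * norm (x - z) powr p)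
      \<le> ereal (- M * norm z powr p) + ereal (norm (x - z) powr p / (p * \<gamma>))"
    by simp
  also have "\<dots> \<le> prox_objective p \<gamma> \<phi> x z"
    unfolding prox_objective_def using lower by (rule add_right_mono)
  finally show ?thesis .
qed

lemma p_calm_prox_objective_coercive:
  fixes \<phi> :: "'a::real_normed_vector \<Rightarrow> ereal"
  assumes p: "1 < p" and \<gamma>: "0 < \<gamma>" and M: "0 \<le> M" and small: "M * 2 powr (p - 1) < 1 / (p * \<gamma>)"
    and lower: "\<And>y. ereal (- M * norm y powr p) \<le> \<phi> y" and \<phi>_0: "\<phi> 0 = 0"
  shows "\<exists>K\<ge>1. \<forall>x z. K * norm x < norm (x - z) \<longrightarrow>
    prox_objective p \<gamma> \<phi> x 0 < prox_objective p \<gamma> \<phi> x z"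
proof -
  define c where "c = 1 / (p * \<gamma>) - M * 2 powr (p - 1)"
  define t where "t = (2::real) powr ((p - 1) / p)"
  define B where "B = (1 / (p * \<gamma> * c)) powr (1 / p)"
  define K where "K = 1 + 1 / (t - 1) + B"
  have c: "0 < c" using small by (simp add: c_def)
  have t: "1 < t" using p by (auto simp: t_def intro: gr_one_powr)
  have B: "0 \<le> B" by (simp add: B_def)
  have tK: "(t - 1) * K = t + (t - 1) * B" using t by (simp add: K_def field_simps)
  have "0 \<le> (t - 1) * B" using t B by simp
  then have K: "1 \<le> K" "1 \<le> (t - 1) * K"
    using t B by (simp add: K_def, subst tK, linarith)
  have "1 / (p * \<gamma> * c) = B powr p"
    using p \<gamma> c by (simp add: B_def powr_powr)
  also have "\<dots> \<le> K powr p"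
    using p t B by (intro powr_mono2) (auto simp: K_def)
  finally have "c * (1 / (p * \<gamma> * c)) \<le> c * K powr p"
    by (rule mult_left_mono) (use c in simp)
  then have cK: "1 / (p * \<gamma>) \<le> c * K powr p"
    using c by simp
  show ?thesis
  proof (intro exI[of _ K] conjI K(1) allI impI)
    fix x z :: 'a
    assume far: "K * norm x < norm (x - z)"
    have "norm x \<le> (t - 1) * K * norm x"
      using mult_right_mono[OF K(2) norm_ge_zero[of x]] by simp
    also have "\<dots> \<le> (t - 1) * norm (x - z)"
      using far t by (simp add: mult.assoc)
    finally have bound: "ereal (c * norm (x - z) powr p) \<le> prox_objective p \<gamma> \<phi> x z"
      unfolding c_def t_def by (rule p_calm_prox_objective_lower_bound[OF p M lower])
    have "norm x powr p / (p * \<gamma>) \<le> c * K powr p * norm x powr p"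
      using mult_right_mono[OF cK, of "norm x powr p"] by simp
    also have "\<dots> = c * (K * norm x) powr p"
      using K by (simp add: powr_mult)
    also have "\<dots> < c * norm (x - z) powr p"
      using far c p K by (intro mult_strict_left_mono powr_less_mono2) auto
    finally have "prox_objective p \<gamma> \<phi> x 0 < ereal (c * norm (x - z) powr p)"
      by (simp add: prox_objective_def \<phi>_0)
    then show "prox_objective p \<gamma> \<phi> x 0 < prox_objective p \<gamma> \<phi> x z"
      using bound by (rule order.strict_trans2)
  qed
qed

lemma ereal_add_le_cycle_imp_nonpos:
  assumes "a + ereal s \<le> b" "b + ereal t \<le> a" "\<bar>a\<bar> \<noteq> \<infinity>"
  shows "s + t \<le> 0"
  using assms by (cases a; cases b) auto

lemma linear_le_powr_near_0:
  fixes L C q :: real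
  assumes q: "1 < q" and C: "0 < C"
  obtains r where "0 < r" "\<And>t. 0 \<le> t \<Longrightarrow> t \<le> r \<Longrightarrow> L * t \<le> C * t powr (1 / q)"
proof (cases "L \<le> 0")
  case True
  show ?thesis
    by (rule that[of 1]) (use True C in \<open>auto intro: order.trans[OF mult_nonpos_nonneg]\<close>)
next
  case False
  define r where "r = (C / L) powr (q / (q - 1))"
  show ?thesis
  proof (rule that)
    show "0 < r" using False C by (simp add: r_def)
    fix t :: real assume t: "0 \<le> t" "t \<le> r"
    have "t powr (1 - 1 / q) \<le> r powr (1 - 1 / q)"
      using t q by (intro powr_mono2) auto
    also have "\<dots> = C / L"
      using q False C by (simp add: r_def powr_powr field_simps)
    finally have "L * t powr (1 - 1 / q) * t powr (1 / q) \<le> C * t powr (1 / q)"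
      using False by (intro mult_right_mono) (auto simp: field_simps)
    moreover have "t powr (1 - 1 / q) * t powr (1 / q) = t"
      using t by (cases "t = 0") (simp_all flip: powr_add)
    ultimately show "L * t \<le> C * t powr (1 / q)"
      by (simp add: mult.assoc)
  qed
qed

locale calm_prox_regular =
  fixes \<phi> :: "'a::euclidean_space \<Rightarrow> ereal" and p q M eps rho \<gamma> :: real
  assumes p: "2 \<le> p" and q: "p \<le> q"
    and proper: "proper_fun \<phi>" and lsc: "lsc_fun \<phi>"
    and M: "0 < M" and calm: "p_calm p M \<phi> 0" and \<phi>_0: "\<phi> 0 = 0"
    and prox_regular: "q_prox_regular q \<phi> 0 0 eps rho"
    and \<gamma>: "0 < \<gamma>" and \<gamma>_calm: "M * 2 powr (p - 1) < 1 / (p * \<gamma>)"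
    and \<gamma>_rho: "\<gamma> * rho * 2 powr (p - 1) < 1"
begin

lemma eps_pos: "0 < eps" and rho_nonneg: "0 \<le> rho"
  using prox_regular by (simp_all add: q_prox_regular_def)

lemma prox_regular_ineq:
  assumes "x \<in> cball 0 eps" "\<zeta> \<in> lim_subdiff \<phi> x" "\<zeta> \<in> cball 0 eps" "\<phi> x < \<phi> 0 + ereal eps"
    and "x' \<in> cball 0 eps"
  shows "\<phi> x + ereal (inner \<zeta> (x' - x) - rho / 2 * norm (x' - x) powr q) \<le> \<phi> x'"
  using prox_regular assms unfolding q_prox_regular_def by blast

lemma not_minf: "\<phi> y \<noteq> -\<infinity>"
  using proper by (simp add: proper_fun_def)

lemma prox_objective_coercive:
  "\<exists>K\<ge>1. \<forall>x z. K * norm x < norm (x - z) \<longrightarrow>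
    prox_objective p \<gamma> \<phi> x 0 < prox_objective p \<gamma> \<phi> x z"
  using p M
  by (intro p_calm_prox_objective_coercive[OF _ \<gamma> _ \<gamma>_calm p_calm_lower_bound[OF calm \<phi>_0] \<phi>_0])
    auto

lemma prox_nonempty: "prox p \<gamma> \<phi> x \<noteq> {}"
proof -
  obtain K where "1 \<le> K"
    and K: "\<And>x z. K * norm x < norm (x - z) \<Longrightarrow> prox_objective p \<gamma> \<phi> x 0 < prox_objective p \<gamma> \<phi> x z"
    using prox_objective_coercive by blast
  have "norm (x - 0) \<le> K * norm x"
    using mult_right_mono[OF \<open>1 \<le> K\<close> norm_ge_zero[of x]] by simp
  moreover have "0 < p" using p by simp
  ultimately show ?thesis
    using prox_nonempty_if_coercive[OF lsc not_minf _ \<gamma> _ K[of x]] by blast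
qed

lemma prox_near_identity: "\<exists>K. \<forall>x. \<forall>y\<in>prox p \<gamma> \<phi> x. norm (x - y) \<le> K * norm x"
proof -
  obtain K where
    K: "\<And>x z. K * norm x < norm (x - z) \<Longrightarrow> prox_objective p \<gamma> \<phi> x 0 < prox_objective p \<gamma> \<phi> x z"
    using prox_objective_coercive by blast
  have "norm (x - y) \<le> K * norm x" if y: "y \<in> prox p \<gamma> \<phi> x" for x y
  proof (rule ccontr)
    assume "\<not> norm (x - y) \<le> K * norm x"
    then have "prox_objective p \<gamma> \<phi> x 0 < prox_objective p \<gamma> \<phi> x y" using K by simp
    moreover have "prox_objective p \<gamma> \<phi> x y \<le> prox_objective p \<gamma> \<phi> x 0"
      using y by (simp add: mem_prox_iff)
    ultimately show False by simp
  qed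
  then show ?thesis by blast
qed

lemma prox_value_le:
  assumes "y \<in> prox p \<gamma> \<phi> x"
  shows "\<phi> y \<le> ereal (norm x powr p / (p * \<gamma>))"
proof -
  have "\<phi> y \<le> prox_objective p \<gamma> \<phi> x y"
    using not_minf[of y] p \<gamma> by (cases "\<phi> y") (auto simp: prox_objective_def)
  also have "\<dots> \<le> prox_objective p \<gamma> \<phi> x 0"
    using assms by (simp add: mem_prox_iff)
  finally show ?thesis by (simp add: prox_objective_def \<phi>_0)
qed

lemma eventually_prox_near_0:
  assumes e: "0 < e"
  shows "eventually (\<lambda>x. \<forall>y\<in>prox p \<gamma> \<phi> x. norm (x - y) \<le> e \<and> norm y \<le> e \<and>
      norm (duality_map p (x - y) /\<^sub>R \<gamma>) \<le> e \<and> \<phi> y < ereal e) (nhds 0)"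
proof -
  obtain K where K: "\<And>x y. y \<in> prox p \<gamma> \<phi> x \<Longrightarrow> norm (x - y) \<le> K * norm x"
    using prox_near_identity by blast
  have norm_0: "((\<lambda>x::'a. norm x) \<longlongrightarrow> 0) (nhds 0)"
    by (rule tendsto_norm_zero[OF filterlim_ident])
  have K_0: "((\<lambda>x::'a. \<bar>K\<bar> * norm x) \<longlongrightarrow> 0) (nhds 0)"
    and K1_0: "((\<lambda>x::'a. (\<bar>K\<bar> + 1) * norm x) \<longlongrightarrow> 0) (nhds 0)"
    using tendsto_mult_right_zero[OF norm_0] by auto
  have J_0: "((\<lambda>x::'a. (\<bar>K\<bar> * norm x) powr (p - 1) / \<gamma>) \<longlongrightarrow> 0) (nhds 0)"
    using p by (intro tendsto_divide_zero tendsto_zero_powrI[OF K_0 tendsto_const]) auto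
  have val_0: "((\<lambda>x::'a. norm x powr p / (p * \<gamma>)) \<longlongrightarrow> 0) (nhds 0)"
    using p by (intro tendsto_divide_zero tendsto_zero_powrI[OF norm_0 tendsto_const]) auto
  note small = order_tendstoD(2)[OF K_0 e] order_tendstoD(2)[OF K1_0 e]
    order_tendstoD(2)[OF J_0 e] order_tendstoD(2)[OF val_0 e]
  from small show ?thesis
  proof eventually_elim
    case (elim x)
    show ?case
    proof (intro ballI conjI)
      fix y assume y: "y \<in> prox p \<gamma> \<phi> x"
      have xy: "norm (x - y) \<le> \<bar>K\<bar> * norm x"
        using K[OF y] mult_right_mono[OF abs_ge_self norm_ge_zero, of K x] by linarith
      then show "norm (x - y) \<le> e" using elim by simp
      have "norm y \<le> norm x + norm (x - y)"
        using norm_triangle_ineq4[of x "x - y"] by simp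
      then show "norm y \<le> e" using xy elim by (simp add: algebra_simps)
      have "norm (duality_map p (x - y) /\<^sub>R \<gamma>) = norm (x - y) powr (p - 1) / \<gamma>"
        using \<gamma> by (simp add: norm_duality_map divide_inverse_commute)
      also have "\<dots> \<le> (\<bar>K\<bar> * norm x) powr (p - 1) / \<gamma>"
        using xy p \<gamma> by (intro divide_right_mono powr_mono2) auto
      finally show "norm (duality_map p (x - y) /\<^sub>R \<gamma>) \<le> e" using elim by simp
      show "\<phi> y < ereal e"
        using prox_value_le[OF y] elim(4) by (simp add: order.strict_trans1)
    qed
  qed
qed

lemma eventually_prox_regular_at_prox:
  "eventually (\<lambda>x. \<forall>y\<in>prox p \<gamma> \<phi> x. norm (x - y) \<le> 1/2 \<and> y \<in> cball 0 eps \<and>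
      (\<forall>x'\<in>cball 0 eps. \<phi> y + ereal (inner (duality_map p (x - y) /\<^sub>R \<gamma>) (x' - y)
        - rho / 2 * norm (x' - y) powr q) \<le> \<phi> x')) (nhds 0)"
proof -
  have "0 < min (1/2) eps" using eps_pos by simp
  from eventually_prox_near_0[OF this] show ?thesis
  proof eventually_elim
    case (elim x)
    show ?case
    proof (intro ballI conjI)
      fix y assume y: "y \<in> prox p \<gamma> \<phi> x"
      note near = bspec[OF elim y]
      then show "norm (x - y) \<le> 1/2" and y_eps: "y \<in> cball 0 eps" by auto
      have "duality_map p (x - y) /\<^sub>R \<gamma> \<in> lim_subdiff \<phi> y"
        using prox_fermat_rule[OF p \<gamma> proper y] frechet_subdiff_subset_lim_subdiff by blast
      moreover have "duality_map p (x - y) /\<^sub>R \<gamma> \<in> cball 0 eps" "\<phi> y < \<phi> 0 + ereal eps"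
        using near \<phi>_0 by (auto simp: order.strict_trans1)
      ultimately show "\<phi> y + ereal (inner (duality_map p (x - y) /\<^sub>R \<gamma>) (x' - y)
          - rho / 2 * norm (x' - y) powr q) \<le> \<phi> x'" if "x' \<in> cball 0 eps" for x'
        using prox_regular_ineq[OF y_eps _ _ _ that] by blast
    qed
  qed
qed

lemma prox_lipschitz_near_0:
  obtains d L where "0 < d" "0 \<le> L"
    "\<And>x y. x \<in> ball 0 d \<Longrightarrow> y \<in> prox p \<gamma> \<phi> x \<Longrightarrow> norm (x - y) \<le> 1/2"
    "\<And>x1 x2 y1 y2. x1 \<in> ball 0 d \<Longrightarrow> x2 \<in> ball 0 d \<Longrightarrow> y1 \<in> prox p \<gamma> \<phi> x1 \<Longrightarrow> y2 \<in> prox p \<gamma> \<phi> x2 \<Longrightarrow>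
      norm (y2 - y1) \<le> L * norm (x2 - x1)"
proof -
  have "0 \<le> \<gamma> * rho" using \<gamma> rho_nonneg by simp
  then obtain L where "0 \<le> L" and L: "\<And>x1 x2 y1 y2 :: 'a.
      norm (x1 - y1) \<le> 1/2 \<Longrightarrow> norm (x2 - y2) \<le> 1/2 \<Longrightarrow>
      - (\<gamma> * rho * norm (y2 - y1) powr q)
        \<le> inner (duality_map p (x2 - y2) - duality_map p (x1 - y1)) (y2 - y1) \<Longrightarrow>
      norm (y2 - y1) \<le> L * norm (x2 - x1)"
    using hypomonotone_duality_imp_lipschitz[OF p q _ \<gamma>_rho] by blast
  obtain d where "0 < d" and near: "\<And>x. dist x 0 < d \<Longrightarrow> \<forall>y\<in>prox p \<gamma> \<phi> x. norm (x - y) \<le> 1/2 \<and>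
      y \<in> cball 0 eps \<and> (\<forall>x'\<in>cball 0 eps. \<phi> y + ereal (inner (duality_map p (x - y) /\<^sub>R \<gamma>) (x' - y)
        - rho / 2 * norm (x' - y) powr q) \<le> \<phi> x')"
    using eventually_prox_regular_at_prox unfolding eventually_nhds_metric by blast
  show thesis
  proof (rule that[OF \<open>0 < d\<close> \<open>0 \<le> L\<close>])
    fix x y assume x: "x \<in> ball 0 d" and y: "y \<in> prox p \<gamma> \<phi> x"
    have "dist x 0 < d" using x by (simp add: dist_commute)
    from bspec[OF near[OF this] y] show "norm (x - y) \<le> 1/2" by (rule conjunct1)
  next
    fix x1 x2 y1 y2
    assume x1: "x1 \<in> ball 0 d" and x2: "x2 \<in> ball 0 d"
      and y1: "y1 \<in> prox p \<gamma> \<phi> x1" and y2: "y2 \<in> prox p \<gamma> \<phi> x2"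
    have "dist x1 0 < d" "dist x2 0 < d" using x1 x2 by (simp_all add: dist_commute)
    note near1 = bspec[OF near[OF this(1)] y1] and near2 = bspec[OF near[OF this(2)] y2]
    (* prox-regularity at y1 tested at y2, and vice versa *)
    note reg1 = bspec[OF conjunct2[OF conjunct2[OF near1]] conjunct1[OF conjunct2[OF near2]]]
      and reg2 = bspec[OF conjunct2[OF conjunct2[OF near2]] conjunct1[OF conjunct2[OF near1]]]
    from reg1 reg2
    have "inner (duality_map p (x1 - y1) /\<^sub>R \<gamma>) (y2 - y1) - rho / 2 * norm (y2 - y1) powr q
        + (inner (duality_map p (x2 - y2) /\<^sub>R \<gamma>) (y1 - y2) - rho / 2 * norm (y1 - y2) powr q) \<le> 0"
      using prox_value_finite[OF proper y1] by (rule ereal_add_le_cycle_imp_nonpos)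
    moreover have "inner (duality_map p (x1 - y1) /\<^sub>R \<gamma>) (y2 - y1)
        = inner (duality_map p (x1 - y1)) (y2 - y1) / \<gamma>"
      and "inner (duality_map p (x2 - y2) /\<^sub>R \<gamma>) (y1 - y2)
        = - (inner (duality_map p (x2 - y2)) (y2 - y1) / \<gamma>)"
      by (simp_all add: divide_inverse_commute inner_diff_right algebra_simps)
    moreover have "norm (y1 - y2) = norm (y2 - y1)" by (rule norm_minus_commute)
    ultimately have "(inner (duality_map p (x1 - y1)) (y2 - y1)
        - inner (duality_map p (x2 - y2)) (y2 - y1)) / \<gamma>
        \<le> rho * norm (y2 - y1) powr q"
      by (simp add: diff_divide_distrib)
    then have "- (\<gamma> * rho * norm (y2 - y1) powr q)
        \<le> inner (duality_map p (x2 - y2) - duality_map p (x1 - y1)) (y2 - y1)"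
      using \<gamma> by (simp add: pos_divide_le_eq inner_diff_left mult.commute mult.left_commute)
    then show "norm (y2 - y1) \<le> L * norm (x2 - x1)"
      by (rule L[OF conjunct1[OF near1] conjunct1[OF near2]])
  qed
qed

lemma locally_holder_prox_and_gradient:
  assumes Cp: "0 < Cp" and Cg: "0 < Cg"
  shows "\<exists>U. open U \<and> 0 \<in> U \<and> U \<subseteq> cball 0 eps \<and> (\<forall>x\<in>U. prox p \<gamma> \<phi> x \<noteq> {}) \<and>
    (\<forall>x1\<in>U. \<forall>x2\<in>U. \<forall>y1\<in>prox p \<gamma> \<phi> x1. \<forall>y2\<in>prox p \<gamma> \<phi> x2.
      norm (y2 - y1) \<le> Cp * norm (x2 - x1) powr (1 / q)) \<and>
    (\<forall>x\<in>U. \<bar>moreau_env p \<gamma> \<phi> x\<bar> \<noteq> \<infinity>) \<and>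
    (\<exists>g. (\<forall>x\<in>U. GDERIV (\<lambda>z. real_of_ereal (moreau_env p \<gamma> \<phi> z)) x :> g x) \<and>
      (\<forall>x1\<in>U. \<forall>x2\<in>U. norm (g x2 - g x1) \<le> Cg * norm (x2 - x1) powr (1 / q)))"
proof -
  have q1: "1 < q" using p q by simp
  obtain d L where d: "0 < d" and L: "0 \<le> L"
    and near: "\<And>x y. x \<in> ball 0 d \<Longrightarrow> y \<in> prox p \<gamma> \<phi> x \<Longrightarrow> norm (x - y) \<le> 1/2"
    and lip: "\<And>x1 x2 y1 y2. x1 \<in> ball 0 d \<Longrightarrow> x2 \<in> ball 0 d \<Longrightarrow>
      y1 \<in> prox p \<gamma> \<phi> x1 \<Longrightarrow> y2 \<in> prox p \<gamma> \<phi> x2 \<Longrightarrow> norm (y2 - y1) \<le> L * norm (x2 - x1)"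
    using prox_lipschitz_near_0 by blast
  define ys where "ys x = (SOME y. y \<in> prox p \<gamma> \<phi> x)" for x
  have ys: "ys x \<in> prox p \<gamma> \<phi> x" for x
    using prox_nonempty[of x] unfolding ys_def by (simp add: some_in_eq)
  define g where "g x = duality_map p (x - ys x) /\<^sub>R \<gamma>" for x
  define Lg where "Lg = (p - 1) * (1 + L) / \<gamma>"
  have g_lip: "norm (g x2 - g x1) \<le> Lg * norm (x2 - x1)"
    if x12: "x1 \<in> ball 0 d" "x2 \<in> ball 0 d" for x1 x2
  proof -
    have "norm (g x2 - g x1) = norm (duality_map p (x2 - ys x2) - duality_map p (x1 - ys x1)) / \<gamma>"
      using \<gamma> by (simp add: g_def divide_inverse_commute flip: scaleR_diff_right)
    also have "\<dots> \<le> (p - 1) * ((1 + L) * norm (x2 - x1)) / \<gamma>"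
      using near[OF x12(1) ys] near[OF x12(2) ys] lip[OF x12 ys ys] \<gamma>
      by (intro divide_right_mono duality_map_residual_lipschitz[OF p]) auto
    finally show ?thesis by (simp add: Lg_def)
  qed
  obtain r1 where r1: "0 < r1" "\<And>t. 0 \<le> t \<Longrightarrow> t \<le> r1 \<Longrightarrow> L * t \<le> Cp * t powr (1 / q)"
    using linear_le_powr_near_0[OF q1 Cp] by blast
  obtain r2 where r2: "0 < r2" "\<And>t. 0 \<le> t \<Longrightarrow> t \<le> r2 \<Longrightarrow> Lg * t \<le> Cg * t powr (1 / q)"
    using linear_le_powr_near_0[OF q1 Cg] by blast
  define \<delta> where "\<delta> = min d (min eps (min r1 r2 / 2))"
  have "0 < \<delta>" "\<delta> \<le> d" "\<delta> \<le> eps" "2 * \<delta> \<le> r1" "2 * \<delta> \<le> r2"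
    using d eps_pos r1 r2 by (auto simp: \<delta>_def min_def)
  then have \<delta>: "0 < \<delta>" "ball 0 \<delta> \<subseteq> ball (0::'a) d" "ball 0 \<delta> \<subseteq> cball (0::'a) eps"
    by (auto intro: subset_ball order.trans[OF ball_subset_cball subset_cball])
  have close: "norm (x2 - x1) \<le> r1" "norm (x2 - x1) \<le> r2"
    if "x1 \<in> ball 0 \<delta>" "x2 \<in> ball 0 \<delta>" for x1 x2 :: 'a
    using that norm_triangle_ineq4[of x2 x1] \<open>2 * \<delta> \<le> r1\<close> \<open>2 * \<delta> \<le> r2\<close> by simp_all
  show ?thesis
  proof (intro exI[of _ "ball 0 \<delta>"] exI[of _ g] conjI ballI)
    show "open (ball (0::'a) \<delta>)" "0 \<in> ball (0::'a) \<delta>" "ball 0 \<delta> \<subseteq> cball (0::'a) eps"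
      using \<delta> by auto
    show "prox p \<gamma> \<phi> x \<noteq> {}" for x by (rule prox_nonempty)
    show "\<bar>moreau_env p \<gamma> \<phi> x\<bar> \<noteq> \<infinity>" for x by (rule moreau_env_finite[OF proper ys])
    fix x1 x2 :: 'a assume x1: "x1 \<in> ball 0 \<delta>" and x2: "x2 \<in> ball 0 \<delta>"
    then have x1_d: "x1 \<in> ball 0 d" and x2_d: "x2 \<in> ball 0 d" using \<delta>(2) by blast+
    show "norm (y2 - y1) \<le> Cp * norm (x2 - x1) powr (1 / q)"
      if "y1 \<in> prox p \<gamma> \<phi> x1" "y2 \<in> prox p \<gamma> \<phi> x2" for y1 y2
      using lip[OF x1_d x2_d that] r1(2)[OF norm_ge_zero close(1)[OF x1 x2]] by linarith
    show "norm (g x2 - g x1) \<le> Cg * norm (x2 - x1) powr (1 / q)"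
      using g_lip[OF x1_d x2_d] r2(2)[OF norm_ge_zero close(2)[OF x1 x2]] by linarith
  next
    fix x assume "x \<in> ball (0::'a) \<delta>"
    then have x_d: "x \<in> ball 0 d" using \<delta>(2) by blast
    from open_ball x_d ys near[OF _ ys] L lip[OF x_d _ ys ys]
    show "GDERIV (\<lambda>z. real_of_ereal (moreau_env p \<gamma> \<phi> z)) x :> g x"
      unfolding g_def by (rule moreau_env_gderiv[OF p \<gamma> proper])
  qed
qed

end

lemma kappa_pos:
  assumes "1 < s" "s \<le> 2"
  shows "0 < kappa s"
proof -
  have "sqrt 3 < 2" by (simp add: real_less_lsqrt)
  then have "(3 - sqrt 3) powr (1 - s) < 1" using assms by (intro powr_less_one) auto
  then show ?thesis using assms by (auto simp: kappa_def add_pos_nonneg)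
qed

lemma calm_prox_regularI:
  fixes \<phi> :: "'a::euclidean_space \<Rightarrow> ereal"
  assumes "2 \<le> p" "p \<le> q" "proper_fun \<phi>" "lsc_fun \<phi>" "0 < M" "p_calm p M \<phi> 0" "\<phi> 0 = 0"
    and "q_prox_regular q \<phi> 0 0 eps rho" "0 < rho"
    and "0 < \<gamma>" "\<gamma> < min (2 powr (1 - p) / (M * p)) (1 / (rho * 2 powr (2 * p - 3)))"
  shows "calm_prox_regular \<phi> p q M eps rho \<gamma>"
proof unfold_locales
  have "\<gamma> * (M * p) < 2 powr (1 - p)"
    using assms by (simp add: field_simps)
  then show "M * 2 powr (p - 1) < 1 / (p * \<gamma>)"
    using assms by (simp add: field_simps powr_diff)
  have "\<gamma> * rho * 2 powr (p - 1) \<le> \<gamma> * rho * 2 powr (2 * p - 3)"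
    using assms by (intro mult_left_mono powr_mono) auto
  also have "\<dots> < 1"
    using assms by (simp add: field_simps)
  finally show "\<gamma> * rho * 2 powr (p - 1) < 1" .
qed (use assms in auto)

theorem theorem8:
  fixes \<phi> :: "'a::euclidean_space \<Rightarrow> ereal"
    and p q M eps rho :: real
  assumes hp: "p \<ge> 2"
    and hproper: "proper_fun \<phi>"
    and hlsc: "lsc_fun \<phi>"
    and hM: "M > 0"
    and hcalm: "p_calm p M \<phi> 0"
    and h0: "\<phi> 0 = 0"
    and hq: "q \<ge> p"
    and hsub: "0 \<in> lim_subdiff \<phi> 0"
    and hreg: "q_prox_regular q \<phi> 0 0 eps rho"
    and heps: "eps < 1 / 2"
    and hrho: "rho > 0"
  shows "\<forall>\<gamma>. 0 < \<gamma> \<and> \<gamma> < min (2 powr (1 - p) / (M * p)) (1 / (rho * 2 powr (2 * p - 3))) \<longrightarrow>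
    (let s = p / (p - 1);
         Lp = (2 * (1 + 2 powr p / kappa s) * eps powr (p - 1)
                / (1 / 2 powr (2 * p - 3) - \<gamma> * rho)) powr (1 / q);
         LLp = 2 * (2 * eps) powr (p - 2) / (\<gamma> * kappa s)
                * ((2 * eps) powr ((q - 1) / q) + Lp)
     in \<exists>U. open U \<and> 0 \<in> U \<and> U \<subseteq> cball 0 eps \<and>
          (\<forall>x\<in>U. prox p \<gamma> \<phi> x \<noteq> {}) \<and>
          (\<forall>x1\<in>U. \<forall>x2\<in>U. \<forall>y1\<in>prox p \<gamma> \<phi> x1. \<forall>y2\<in>prox p \<gamma> \<phi> x2.
              norm (y2 - y1) \<le> Lp * norm (x2 - x1) powr (1 / q)) \<and>
          (\<forall>x\<in>U. \<bar>moreau_env p \<gamma> \<phi> x\<bar> \<noteq> \<infinity>) \<and>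
          (\<exists>g. (\<forall>x\<in>U. GDERIV (\<lambda>z. real_of_ereal (moreau_env p \<gamma> \<phi> z)) x :> g x) \<and>
               (\<forall>x1\<in>U. \<forall>x2\<in>U. norm (g x2 - g x1) \<le> LLp * norm (x2 - x1) powr (1 / q))))"
proof (intro allI impI, goal_cases)
  case (1 \<gamma>)
  interpret calm_prox_regular \<phi> p q M eps rho \<gamma>
    using calm_prox_regularI[OF hp hq hproper hlsc hM hcalm h0 hreg hrho] 1 by blast
  define s where "s = p / (p - 1)"
  define Lp where "Lp = (2 * (1 + 2 powr p / kappa s) * eps powr (p - 1)
    / (1 / 2 powr (2 * p - 3) - \<gamma> * rho)) powr (1 / q)"
  define LLp where "LLp = 2 * (2 * eps) powr (p - 2) / (\<gamma> * kappa s)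
    * ((2 * eps) powr ((q - 1) / q) + Lp)"
  have "0 < kappa s" using hp by (intro kappa_pos) (auto simp: s_def field_simps)
  moreover have "0 < 1 / 2 powr (2 * p - 3) - \<gamma> * rho"
    using 1 hrho by (simp add: field_simps)
  moreover have "0 < 1 + 2 powr p / kappa s"
    using \<open>0 < kappa s\<close> by (simp add: add_pos_pos)
  ultimately have "0 < Lp"
    using eps_pos by (simp add: Lp_def)
  then have "0 < LLp"
    using \<open>0 < kappa s\<close> eps_pos \<gamma> by (simp add: LLp_def add_nonneg_pos)
  with \<open>0 < Lp\<close> show ?case
    unfolding Let_def s_def[symmetric] Lp_def[symmetric] LLp_def[symmetric]
    by (rule locally_holder_prox_and_gradient)
qed

end
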